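(* Let $p \in \mathbf{C}[x_1,\dots,x_n]$ be of the form $$p = x_1^{M_1}\cdots x_n^{M_n} + \sum_j c(j)\, x_1^{i_1(j)}\cdots x_n^{i_n(j)},$$ where the $c(j)\in\mathbf{C}$ are coefficients, all $M_i>0$, all monomials in the sum are different from $x_1^{M_1}\cdots x_n^{M_n}$, and $i_k(j)\le M_k$ for all $k,j$. If $q\in\mathbf{C}[x_1,\dots,x_n]$ and $\varphi(p)=q$ for some automorphism $\varphi$ of $\mathbf{C}[x_1,\dots,x_N]$ with $N\ge n$, then $\alpha(p)=q$ for some automorphism $\alpha$ of $\mathbf{C}[x_1,\dots,x_n]$.
   Context: Automorphisms are $\mathbf{C}$-algebra automorphisms; $\mathbf{C}[x_1,\dots,x_n]$ is regarded as a subalgebra of $\mathbf{C}[x_1,\dots,x_N]$. *)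

theory Defs
  imports Complex_Main "HOL-Library.Poly_Mapping"
begin

text \<open>Polynomials over C in countably many variables x_0, x_1, ...
  (x_k of the paper is variable k-1 here).\<close>

type_synonym mpoly = "(nat \<Rightarrow>\<^sub>0 nat) \<Rightarrow>\<^sub>0 complex"

definition const_mp :: "complex \<Rightarrow> mpoly" where
  "const_mp c = Poly_Mapping.single 0 c"

definition poly_in :: "nat \<Rightarrow> mpoly set" where
  "poly_in n = {p. \<forall>m \<in> Poly_Mapping.keys p. \<forall>v \<in> Poly_Mapping.keys m. v < n}"

definition is_alg_aut :: "nat \<Rightarrow> (mpoly \<Rightarrow> mpoly) \<Rightarrow> bool" where
  "is_alg_aut n \<phi> \<longleftrightarrow>
     bij_betw \<phi> (poly_in n) (poly_in n) \<and>
     (\<forall>p\<in>poly_in n. \<forall>q\<in>poly_in n. \<phi> (p + q) = \<phi> p + \<phi> q) \<and>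
     (\<forall>p\<in>poly_in n. \<forall>q\<in>poly_in n. \<phi> (p * q) = \<phi> p * \<phi> q) \<and>
     (\<forall>c. \<forall>p\<in>poly_in n. \<phi> (const_mp c * p) = const_mp c * \<phi> p) \<and>
     \<phi> 1 = 1"

end

(* Write phi for the automorphism of C[x_1..x_N] and psi for its inverse.

   First, phi maps every x_k (k <= n) into C[x_1..x_n]. Otherwise some phi(x_k) involves a variable
   x_j with j > n; let d_k be the x_j-degree of phi(x_k). Since every monomial of p divides x^M and
   all M_k > 0, the part of phi(p) of x_j-degree D = sum_k M_k d_k > 0 is the product of the powers
   t_k^M_k (d_k > 0) of the leading x_j-coefficients t_k of the phi(x_k) with phi(c), where c is the
   coefficient of prod_{d_k > 0} x_k^M_k in p regarded as a polynomial in those variables. As c <> 0,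
   phi is injective and there are no zero divisors, this part is nonzero, contradicting
   phi(p) = q in C[x_1..x_n].

   Second, psi maps every x_i (i <= n) into C[x_1..x_n]. By the chain rule for psi(phi(x_k)) = x_k,
   and because phi(x_k) only involves x_1..x_n, the n x n matrix A = (psi(d phi(x_k) / d x_i)) has
   the right inverse (d psi(x_i) / d x_l) (l <= n) and annihilates the column (d psi(x_i) / d x_l)_i
   for every l > n. Over a domain a square matrix with a right inverse has trivial kernel, so no
   psi(x_i) involves x_l. Hence phi restricts to an automorphism of C[x_1..x_n]. *)

theory Submission
  imports Defs "Jordan_Normal_Form.Determinant"
begin

section \<open>Variables and monomials\<close>

definition Var :: "nat \<Rightarrow> mpoly" where
  "Var k = Poly_Mapping.single (Poly_Mapping.single k 1) 1"

lemma Var_nonzero: "Var k \<noteq> 0"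
  by (simp add: Var_def flip: keys_eq_empty)

lemma lookup_const_mp_mult:
  "Poly_Mapping.lookup (const_mp c * a) m = c * Poly_Mapping.lookup a m"
  by (simp add: const_mp_def mult_map_scale_conv_mult[symmetric] map.rep_eq when_def)

lemma const_mp_0 [simp]: "const_mp 0 = 0"
  and const_mp_1 [simp]: "const_mp 1 = 1"
  by (simp_all add: const_mp_def)

lemma single_eq_const_mp_mult:
  "Poly_Mapping.single m c = const_mp c * Poly_Mapping.single m (1::complex)"
  by (simp add: const_mp_def mult_single)

lemma poly_mapping_eq_sum_single:
  "(a :: 'a \<Rightarrow>\<^sub>0 'b::comm_monoid_add) =
     (\<Sum>m\<in>Poly_Mapping.keys a. Poly_Mapping.single m (Poly_Mapping.lookup a m))"
proof (rule poly_mapping_eqI)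
  fix k
  have "(\<Sum>m\<in>Poly_Mapping.keys a. Poly_Mapping.lookup (Poly_Mapping.single m (Poly_Mapping.lookup a m)) k)
      = (\<Sum>m\<in>Poly_Mapping.keys a. if m = k then Poly_Mapping.lookup a m else 0)"
    by (rule sum.cong) (auto simp: lookup_single when_def)
  then show "Poly_Mapping.lookup a k =
      Poly_Mapping.lookup (\<Sum>m\<in>Poly_Mapping.keys a. Poly_Mapping.single m (Poly_Mapping.lookup a m)) k"
    by (simp add: lookup_sum sum.delta in_keys_iff)
qed

lemma poly_in_iff_keys: "a \<in> poly_in n \<longleftrightarrow> (\<forall>m\<in>Poly_Mapping.keys a. Poly_Mapping.keys m \<subseteq> {..<n})"
  by (auto simp: poly_in_def)

lemma poly_inI:
  "(\<And>m v. m \<in> Poly_Mapping.keys a \<Longrightarrow> v \<in> Poly_Mapping.keys m \<Longrightarrow> v < n) \<Longrightarrow> a \<in> poly_in n"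
  by (auto simp: poly_in_def)

lemma poly_inD:
  "a \<in> poly_in n \<Longrightarrow> m \<in> Poly_Mapping.keys a \<Longrightarrow> v \<in> Poly_Mapping.keys m \<Longrightarrow> v < n"
  by (auto simp: poly_in_def)

lemma poly_in_0 [simp]: "0 \<in> poly_in n"
  and poly_in_1 [simp]: "1 \<in> poly_in n"
  and poly_in_const_mp [simp]: "const_mp c \<in> poly_in n"
  by (auto simp: poly_in_def const_mp_def)

lemma poly_in_Var: "k < n \<Longrightarrow> Var k \<in> poly_in n"
  by (auto simp: poly_in_def Var_def)

lemma poly_in_mono: "n \<le> N \<Longrightarrow> a \<in> poly_in n \<Longrightarrow> a \<in> poly_in N"
  by (metis poly_in_iff_keys lessThan_subset_iff subset_trans)

lemma poly_in_add: "a \<in> poly_in n \<Longrightarrow> b \<in> poly_in n \<Longrightarrow> a + b \<in> poly_in n"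
  using keys_add[of a b] by (auto simp: poly_in_def)

lemma poly_in_mult:
  assumes "a \<in> poly_in n" "b \<in> poly_in n"
  shows "a * b \<in> poly_in n"
proof (rule poly_inI)
  fix m v
  assume "m \<in> Poly_Mapping.keys (a * b)" "v \<in> Poly_Mapping.keys m"
  moreover obtain m1 m2 where "m = m1 + m2" "m1 \<in> Poly_Mapping.keys a" "m2 \<in> Poly_Mapping.keys b"
    using \<open>m \<in> Poly_Mapping.keys (a * b)\<close> keys_mult[of a b] by blast
  ultimately show "v < n"
    using assms keys_add[of m1 m2] by (auto dest: poly_inD)
qed

lemma poly_in_sum: "(\<And>i. i \<in> I \<Longrightarrow> g i \<in> poly_in n) \<Longrightarrow> sum g I \<in> poly_in n"
  by (induction I rule: infinite_finite_induct) (auto intro: poly_in_add)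

lemma poly_in_prod: "(\<And>i. i \<in> I \<Longrightarrow> g i \<in> poly_in n) \<Longrightarrow> prod g I \<in> poly_in n"
  by (induction I rule: infinite_finite_induct) (auto intro: poly_in_mult)

lemma poly_in_power: "a \<in> poly_in n \<Longrightarrow> a ^ e \<in> poly_in n"
  by (induction e) (auto intro: poly_in_mult)

lemma single_single_eq_Var_power:
  "Poly_Mapping.single (Poly_Mapping.single k e) (1::complex) = Var k ^ e"
proof (induction e)
  case (Suc e)
  have "Poly_Mapping.single (Poly_Mapping.single k (Suc e)) (1::complex)
      = Var k * Poly_Mapping.single (Poly_Mapping.single k e) 1"
    by (simp add: Var_def mult_single flip: single_add)
  with Suc show ?case by simp
qed simp

lemma single_sum_eq_prod_single:
  "Poly_Mapping.single (\<Sum>k\<in>K. g k) (1::complex) = (\<Prod>k\<in>K. Poly_Mapping.single (g k) 1)"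
proof (induction K rule: infinite_finite_induct)
  case (insert x F)
  have "Poly_Mapping.single (g x + sum g F) (1::complex) =
      Poly_Mapping.single (g x) 1 * Poly_Mapping.single (sum g F) 1"
    by (simp add: mult_single)
  with insert show ?case by simp
qed simp_all

lemma monomial_eq_prod_Var_power:
  assumes "Poly_Mapping.keys m \<subseteq> {..<n}"
  shows "Poly_Mapping.single m (1::complex) = (\<Prod>k<n. Var k ^ Poly_Mapping.lookup m k)"
proof -
  have "m = (\<Sum>k<n. Poly_Mapping.single k (Poly_Mapping.lookup m k))"
  proof (rule poly_mapping_eqI)
    fix v
    show "Poly_Mapping.lookup m v = Poly_Mapping.lookup (\<Sum>k<n. Poly_Mapping.single k (Poly_Mapping.lookup m k)) v"
      using assms by (auto simp: lookup_sum lookup_single when_def in_keys_iff)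
  qed
  then have "Poly_Mapping.single m (1::complex) =
      Poly_Mapping.single (\<Sum>k<n. Poly_Mapping.single k (Poly_Mapping.lookup m k)) 1"
    by (rule arg_cong)
  then show ?thesis
    by (simp only: single_sum_eq_prod_single single_single_eq_Var_power)
qed

lemma mpoly_eq_sum_monomials:
  assumes "p \<in> poly_in n"
  shows "p = (\<Sum>m\<in>Poly_Mapping.keys p. const_mp (Poly_Mapping.lookup p m) * (\<Prod>k<n. Var k ^ Poly_Mapping.lookup m k))"
proof -
  have "p = (\<Sum>m\<in>Poly_Mapping.keys p. Poly_Mapping.single m (Poly_Mapping.lookup p m))"
    by (rule poly_mapping_eq_sum_single)
  also have "\<dots> = (\<Sum>m\<in>Poly_Mapping.keys p. const_mp (Poly_Mapping.lookup p m) * (\<Prod>k<n. Var k ^ Poly_Mapping.lookup m k))"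
  proof (rule sum.cong)
    fix m assume "m \<in> Poly_Mapping.keys p"
    with assms have "Poly_Mapping.keys m \<subseteq> {..<n}"
      by (simp add: poly_in_iff_keys)
    then show "Poly_Mapping.single m (Poly_Mapping.lookup p m) =
        const_mp (Poly_Mapping.lookup p m) * (\<Prod>k<n. Var k ^ Poly_Mapping.lookup m k)"
      by (subst single_eq_const_mp_mult) (simp add: monomial_eq_prod_Var_power)
  qed simp
  finally show ?thesis .
qed

lemma poly_in_induct [consumes 1, case_names const Var add mult]:
  assumes a: "a \<in> poly_in n"
    and const: "\<And>c. P (const_mp c)"
    and Var: "\<And>k. k < n \<Longrightarrow> P (Var k)"
    and add: "\<And>a b. a \<in> poly_in n \<Longrightarrow> b \<in> poly_in n \<Longrightarrow> P a \<Longrightarrow> P b \<Longrightarrow> P (a + b)"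
    and mult: "\<And>a b. a \<in> poly_in n \<Longrightarrow> b \<in> poly_in n \<Longrightarrow> P a \<Longrightarrow> P b \<Longrightarrow> P (a * b)"
  shows "P a"
proof -
  define C where "C = {a \<in> poly_in n. P a}"
  have C_const: "const_mp c \<in> C" for c
    using const by (simp add: C_def)
  have C_add: "a + b \<in> C" and C_mult: "a * b \<in> C" if "a \<in> C" "b \<in> C" for a b
    using that add mult poly_in_add poly_in_mult by (simp_all add: C_def)
  have C_sum: "sum g I \<in> C" if "\<And>i. i \<in> I \<Longrightarrow> g i \<in> C" for g :: "_ \<Rightarrow> mpoly" and I
    using that C_const[of 0] by (induction I rule: infinite_finite_induct) (auto intro: C_add)
  have C_prod: "prod g I \<in> C" if "\<And>i. i \<in> I \<Longrightarrow> g i \<in> C" for g :: "_ \<Rightarrow> mpoly" and I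
    using that C_const[of 1] by (induction I rule: infinite_finite_induct) (auto intro: C_mult)
  have C_power: "b ^ e \<in> C" if "b \<in> C" for b e
    using that C_const[of 1] by (induction e) (auto intro: C_mult)
  have "Var k \<in> C" if "k < n" for k
    using that Var poly_in_Var by (simp add: C_def)
  then have "const_mp c * (\<Prod>k<n. Var k ^ e k) \<in> C" for c e
    by (intro C_mult C_const C_prod C_power) simp
  then have "(\<Sum>m\<in>Poly_Mapping.keys a. const_mp (Poly_Mapping.lookup a m) *
      (\<Prod>k<n. Var k ^ Poly_Mapping.lookup m k)) \<in> C"
    by (rule C_sum)
  then have "a \<in> C"
    by (subst mpoly_eq_sum_monomials[OF a])
  then show ?thesis
    by (simp add: C_def)
qed

section \<open>Partial derivatives\<close>

definition partial_deriv :: "nat \<Rightarrow> mpoly \<Rightarrow> mpoly" where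
  "partial_deriv j a = Abs_poly_mapping (\<lambda>m.
     of_nat (Poly_Mapping.lookup m j + 1) * Poly_Mapping.lookup a (m + Poly_Mapping.single j 1))"

lemma lookup_partial_deriv:
  "Poly_Mapping.lookup (partial_deriv j a) m =
     of_nat (Poly_Mapping.lookup m j + 1) * Poly_Mapping.lookup a (m + Poly_Mapping.single j 1)"
proof -
  have "finite ((\<lambda>m. m + Poly_Mapping.single j 1) -` Poly_Mapping.keys a)"
    by (rule finite_vimageI) (auto simp: inj_on_def)
  then have "finite {m. of_nat (Poly_Mapping.lookup m j + 1) *
      Poly_Mapping.lookup a (m + Poly_Mapping.single j 1) \<noteq> (0::complex)}"
    by (rule rev_finite_subset) (auto simp: in_keys_iff)
  then show ?thesis
    by (simp add: partial_deriv_def)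
qed

lemma partial_deriv_0 [simp]: "partial_deriv j 0 = 0"
  by (rule poly_mapping_eqI) (simp add: lookup_partial_deriv)

lemma partial_deriv_add: "partial_deriv j (a + b) = partial_deriv j a + partial_deriv j b"
  by (rule poly_mapping_eqI) (simp add: lookup_partial_deriv lookup_add algebra_simps)

lemma partial_deriv_sum: "partial_deriv j (sum g I) = (\<Sum>i\<in>I. partial_deriv j (g i))"
  by (induction I rule: infinite_finite_induct) (auto simp: partial_deriv_add)

lemma diff_single_add_commute:
  "0 < Poly_Mapping.lookup m j \<Longrightarrow>
     m - Poly_Mapping.single j 1 + m' = m + m' - Poly_Mapping.single j (1::nat)"
  by (rule poly_mapping_eqI) (auto simp: lookup_add lookup_minus lookup_single when_def)

lemma diff_single_add_single:
  "0 < Poly_Mapping.lookup m j \<Longrightarrow> m - Poly_Mapping.single j 1 + Poly_Mapping.single j (1::nat) = m"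
  using diff_single_add_commute[of m j "Poly_Mapping.single j 1"] by simp

lemma partial_deriv_single:
  "partial_deriv j (Poly_Mapping.single m c) =
     Poly_Mapping.single (m - Poly_Mapping.single j 1) (of_nat (Poly_Mapping.lookup m j) * c)"
proof (rule poly_mapping_eqI)
  fix m'
  let ?\<delta> = "Poly_Mapping.single j (1::nat)"
  show "Poly_Mapping.lookup (partial_deriv j (Poly_Mapping.single m c)) m' =
      Poly_Mapping.lookup (Poly_Mapping.single (m - ?\<delta>) (of_nat (Poly_Mapping.lookup m j) * c)) m'"
  proof (cases "m = m' + ?\<delta>")
    case True
    then show ?thesis
      by (simp add: lookup_partial_deriv lookup_add)
  next
    case False
    have "Poly_Mapping.lookup m j = 0 \<or> m - ?\<delta> \<noteq> m'"
      using False diff_single_add_single[of m j] by auto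
    with False show ?thesis
      by (auto simp: lookup_partial_deriv lookup_single when_def)
  qed
qed

lemma partial_deriv_single_mult_single:
  "partial_deriv j (Poly_Mapping.single m1 c1 * Poly_Mapping.single m2 c2) =
     partial_deriv j (Poly_Mapping.single m1 c1) * Poly_Mapping.single m2 c2 +
     Poly_Mapping.single m1 c1 * partial_deriv j (Poly_Mapping.single m2 c2)"
proof -
  let ?\<delta> = "Poly_Mapping.single j (1::nat)"
  let ?a = "Poly_Mapping.lookup m1 j" and ?b = "Poly_Mapping.lookup m2 j"
  have "partial_deriv j (Poly_Mapping.single m1 c1 * Poly_Mapping.single m2 c2) =
      Poly_Mapping.single (m1 + m2 - ?\<delta>) (of_nat (?a + ?b) * (c1 * c2))"
    by (simp add: mult_single partial_deriv_single lookup_add)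
  also have "\<dots> = Poly_Mapping.single (m1 + m2 - ?\<delta>) (of_nat ?a * c1 * c2) +
      Poly_Mapping.single (m1 + m2 - ?\<delta>) (c1 * (of_nat ?b * c2))"
    by (simp add: algebra_simps flip: single_add)
  also have "Poly_Mapping.single (m1 + m2 - ?\<delta>) (of_nat ?a * c1 * c2) =
      Poly_Mapping.single (m1 - ?\<delta> + m2) (of_nat ?a * c1 * c2)"
    using diff_single_add_commute[of m1 j m2] by (cases "?a = 0") simp_all
  also have "Poly_Mapping.single (m1 + m2 - ?\<delta>) (c1 * (of_nat ?b * c2)) =
      Poly_Mapping.single (m1 + (m2 - ?\<delta>)) (c1 * (of_nat ?b * c2))"
    using diff_single_add_commute[of m2 j m1] by (cases "?b = 0") (simp_all add: add.commute)
  finally show ?thesis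
    by (simp add: partial_deriv_single mult_single)
qed

lemma partial_deriv_mult: "partial_deriv j (a * b) = partial_deriv j a * b + a * partial_deriv j b"
proof -
  have single_mult: "partial_deriv j (Poly_Mapping.single m c * b) =
      partial_deriv j (Poly_Mapping.single m c) * b + Poly_Mapping.single m c * partial_deriv j b" for m c b
  proof -
    let ?B = "\<lambda>l. Poly_Mapping.single l (Poly_Mapping.lookup b l)"
    have "partial_deriv j (Poly_Mapping.single m c * (\<Sum>l\<in>Poly_Mapping.keys b. ?B l)) =
        partial_deriv j (Poly_Mapping.single m c) * (\<Sum>l\<in>Poly_Mapping.keys b. ?B l) +
        Poly_Mapping.single m c * partial_deriv j (\<Sum>l\<in>Poly_Mapping.keys b. ?B l)"
      by (simp add: sum_distrib_left partial_deriv_sum partial_deriv_single_mult_single sum.distrib)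
    then show ?thesis
      by (simp flip: poly_mapping_eq_sum_single)
  qed
  let ?A = "\<lambda>l. Poly_Mapping.single l (Poly_Mapping.lookup a l)"
  have "partial_deriv j ((\<Sum>l\<in>Poly_Mapping.keys a. ?A l) * b) =
      partial_deriv j (\<Sum>l\<in>Poly_Mapping.keys a. ?A l) * b + (\<Sum>l\<in>Poly_Mapping.keys a. ?A l) * partial_deriv j b"
    by (simp add: sum_distrib_right partial_deriv_sum single_mult sum.distrib)
  then show ?thesis
    by (simp flip: poly_mapping_eq_sum_single)
qed

lemma partial_deriv_Var: "partial_deriv j (Var k) = (if j = k then 1 else 0)"
  by (auto simp: Var_def partial_deriv_single lookup_single)

lemma partial_deriv_const_mp [simp]: "partial_deriv j (const_mp c) = 0"
  by (simp add: const_mp_def partial_deriv_single)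

lemma poly_in_partial_deriv:
  assumes "a \<in> poly_in n"
  shows "partial_deriv j a \<in> poly_in n"
proof (rule poly_inI)
  fix m v
  assume "m \<in> Poly_Mapping.keys (partial_deriv j a)" "v \<in> Poly_Mapping.keys m"
  then have "m + Poly_Mapping.single j 1 \<in> Poly_Mapping.keys a"
    and "v \<in> Poly_Mapping.keys (m + Poly_Mapping.single j 1)"
    by (auto simp: in_keys_iff lookup_partial_deriv lookup_add)
  with assms show "v < n"
    by (rule poly_inD)
qed

lemma partial_deriv_eq_0_if_poly_in:
  assumes "a \<in> poly_in n" "n \<le> j"
  shows "partial_deriv j a = 0"
proof (rule poly_mapping_eqI)
  fix m :: "nat \<Rightarrow>\<^sub>0 nat"
  have "j \<in> Poly_Mapping.keys (m + Poly_Mapping.single j 1)"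
    by (simp add: in_keys_iff lookup_add)
  with assms have "Poly_Mapping.lookup a (m + Poly_Mapping.single j 1) = 0"
    using poly_inD[OF assms(1)] by (meson in_keys_iff leD)
  then show "Poly_Mapping.lookup (partial_deriv j a) m = Poly_Mapping.lookup 0 m"
    by (simp add: lookup_partial_deriv)
qed

lemma poly_in_if_partial_deriv_eq_0:
  assumes a: "a \<in> poly_in N" and deriv_0: "\<And>j. n \<le> j \<Longrightarrow> j < N \<Longrightarrow> partial_deriv j a = 0"
  shows "a \<in> poly_in n"
proof (rule poly_inI, rule ccontr)
  fix m v
  assume m: "m \<in> Poly_Mapping.keys a" and v: "v \<in> Poly_Mapping.keys m" and "\<not> v < n"
  have "Poly_Mapping.lookup (partial_deriv v a) (m - Poly_Mapping.single v 1) =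
      of_nat (Poly_Mapping.lookup m v) * Poly_Mapping.lookup a m"
    using v diff_single_add_single[of m v] by (simp add: lookup_partial_deriv in_keys_iff lookup_minus)
  also have "\<dots> \<noteq> 0"
    using m v by (simp add: in_keys_iff)
  finally have "partial_deriv v a \<noteq> 0"
    by auto
  with deriv_0 poly_inD[OF a m v] \<open>\<not> v < n\<close> show False
    by simp
qed

section \<open>Algebra homomorphisms and the chain rule\<close>

locale alg_hom_on =
  fixes N :: nat and f :: "mpoly \<Rightarrow> mpoly"
  assumes hom_add: "a \<in> poly_in N \<Longrightarrow> b \<in> poly_in N \<Longrightarrow> f (a + b) = f a + f b"
    and hom_mult: "a \<in> poly_in N \<Longrightarrow> b \<in> poly_in N \<Longrightarrow> f (a * b) = f a * f b"
    and hom_smult: "a \<in> poly_in N \<Longrightarrow> f (const_mp c * a) = const_mp c * f a"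
    and hom_one: "f 1 = 1"
begin

lemma hom_zero: "f 0 = 0"
  using hom_add[of 0 0] by simp

lemma hom_const_mp: "f (const_mp c) = const_mp c"
  using hom_smult[of 1 c] by (simp add: hom_one)

lemma hom_sum: "(\<And>i. i \<in> I \<Longrightarrow> g i \<in> poly_in N) \<Longrightarrow> f (sum g I) = (\<Sum>i\<in>I. f (g i))"
  by (induction I rule: infinite_finite_induct) (simp_all add: hom_zero hom_add poly_in_sum)

lemma hom_prod: "(\<And>i. i \<in> I \<Longrightarrow> g i \<in> poly_in N) \<Longrightarrow> f (prod g I) = (\<Prod>i\<in>I. f (g i))"
  by (induction I rule: infinite_finite_induct) (simp_all add: hom_one hom_mult poly_in_prod)

lemma hom_power: "a \<in> poly_in N \<Longrightarrow> f (a ^ e) = f a ^ e"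
  by (induction e) (simp_all add: hom_one hom_mult poly_in_power)

lemma hom_sum_prod_Var_power:
  assumes "n \<le> N"
  shows "f (\<Sum>m\<in>K. const_mp (c m) * (\<Prod>k<n. Var k ^ e m k)) =
    (\<Sum>m\<in>K. const_mp (c m) * (\<Prod>k<n. f (Var k) ^ e m k))"
proof -
  have Var: "Var k \<in> poly_in N" if "k < n" for k
    using that assms by (simp add: poly_in_Var)
  have prod: "(\<Prod>k<n. Var k ^ e m k) \<in> poly_in N" for m
    by (rule poly_in_prod) (simp add: Var poly_in_power)
  have "f (\<Prod>k<n. Var k ^ e m k) = (\<Prod>k<n. f (Var k) ^ e m k)" for m
    using hom_prod[of "{..<n}" "\<lambda>k. Var k ^ e m k"] by (simp add: hom_power Var poly_in_power)
  then show ?thesis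
    by (simp add: hom_sum hom_smult prod poly_in_mult)
qed

lemma hom_maps_poly_in:
  assumes "n \<le> N" and Var: "\<And>k. k < n \<Longrightarrow> f (Var k) \<in> poly_in n" and "a \<in> poly_in n"
  shows "f a \<in> poly_in n"
  using \<open>a \<in> poly_in n\<close>
proof (induction rule: poly_in_induct)
  case (add a b)
  then show ?case
    using poly_in_mono[OF \<open>n \<le> N\<close>] by (simp add: hom_add poly_in_add)
next
  case (mult a b)
  then show ?case
    using poly_in_mono[OF \<open>n \<le> N\<close>] by (simp add: hom_mult poly_in_mult)
qed (simp_all add: hom_const_mp Var)

lemma chain_rule:
  assumes "a \<in> poly_in N"
  shows "partial_deriv l (f a) = (\<Sum>i<N. f (partial_deriv i a) * partial_deriv l (f (Var i)))"
  using assms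
proof (induction rule: poly_in_induct)
  case (const c)
  then show ?case
    by (simp add: hom_const_mp hom_zero)
next
  case (Var k)
  have "(\<Sum>i<N. f (partial_deriv i (Var k)) * partial_deriv l (f (Var i))) =
      (\<Sum>i<N. if i = k then partial_deriv l (f (Var i)) else 0)"
    by (rule sum.cong) (simp_all add: partial_deriv_Var hom_one hom_zero)
  with Var show ?case
    by simp
next
  case (add a b)
  then show ?case
    by (simp add: hom_add partial_deriv_add poly_in_partial_deriv sum.distrib distrib_right)
next
  case (mult a b)
  have "partial_deriv l (f (a * b)) = partial_deriv l (f a) * f b + f a * partial_deriv l (f b)"
    using mult by (simp add: hom_mult partial_deriv_mult)
  also have "\<dots> = (\<Sum>i<N. (f (partial_deriv i a) * f b + f a * f (partial_deriv i b)) *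
      partial_deriv l (f (Var i)))"
    using mult by (simp add: sum_distrib_left sum_distrib_right sum.distrib algebra_simps)
  also have "\<dots> = (\<Sum>i<N. f (partial_deriv i (a * b)) * partial_deriv l (f (Var i)))"
    using mult by (simp add: partial_deriv_mult hom_add hom_mult poly_in_partial_deriv poly_in_mult)
  finally show ?case .
qed

end

lemma alg_hom_on_if_is_alg_aut: "is_alg_aut N \<phi> \<Longrightarrow> alg_hom_on N \<phi>"
  unfolding is_alg_aut_def by (intro alg_hom_on.intro) auto

lemma is_alg_aut_inv_into:
  assumes "is_alg_aut N \<phi>"
  shows "is_alg_aut N (inv_into (poly_in N) \<phi>)"
proof -
  interpret alg_hom_on N \<phi>
    using assms by (rule alg_hom_on_if_is_alg_aut)
  let ?\<psi> = "inv_into (poly_in N) \<phi>"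
  have bij: "bij_betw \<phi> (poly_in N) (poly_in N)"
    using assms by (simp add: is_alg_aut_def)
  have \<psi>_in: "?\<psi> a \<in> poly_in N" and \<phi>_\<psi>: "\<phi> (?\<psi> a) = a" if "a \<in> poly_in N" for a
    using that bij by (auto simp: bij_betw_def intro: inv_into_into f_inv_into_f)
  have \<psi>_\<phi>: "?\<psi> (\<phi> a) = a" if "a \<in> poly_in N" for a
    using that bij by (simp add: bij_betw_def)
  have "?\<psi> (a + b) = ?\<psi> a + ?\<psi> b" "?\<psi> (a * b) = ?\<psi> a * ?\<psi> b" "?\<psi> (const_mp c * a) = const_mp c * ?\<psi> a"
    if "a \<in> poly_in N" "b \<in> poly_in N" for a b c
    using \<psi>_\<phi> hom_add[of "?\<psi> a" "?\<psi> b"] hom_mult[of "?\<psi> a" "?\<psi> b"] hom_smult[of "?\<psi> a" c]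
      that \<psi>_in \<phi>_\<psi> by (metis poly_in_add poly_in_mult poly_in_const_mp)+
  moreover have "?\<psi> 1 = 1"
    using \<psi>_\<phi>[of 1] by (simp add: hom_one)
  ultimately show ?thesis
    using bij by (auto simp: is_alg_aut_def bij_betw_inv_into)
qed

section \<open>Components with respect to one variable\<close>

definition var_component :: "nat \<Rightarrow> nat \<Rightarrow> mpoly \<Rightarrow> mpoly" where
  "var_component j e a = Poly_Mapping.mapp (\<lambda>m c. c when Poly_Mapping.lookup m j = e) a"

definition var_degree_le :: "nat \<Rightarrow> nat \<Rightarrow> mpoly \<Rightarrow> bool" where
  "var_degree_le j d a \<longleftrightarrow> (\<forall>m\<in>Poly_Mapping.keys a. Poly_Mapping.lookup m j \<le> d)"

lemma lookup_var_component:
  "Poly_Mapping.lookup (var_component j e a) m = (Poly_Mapping.lookup a m when Poly_Mapping.lookup m j = e)"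
  by (simp add: var_component_def lookup_mapp in_keys_iff when_def)

lemma var_component_add: "var_component j e (a + b) = var_component j e a + var_component j e b"
  by (rule poly_mapping_eqI) (simp add: lookup_var_component lookup_add when_def)

lemma var_component_0 [simp]: "var_component j e 0 = 0"
  by (rule poly_mapping_eqI) (simp add: lookup_var_component)

lemma var_component_sum: "var_component j e (sum g I) = (\<Sum>i\<in>I. var_component j e (g i))"
  by (induction I rule: infinite_finite_induct) (simp_all add: var_component_add)

lemma var_component_const_mp_mult: "var_component j e (const_mp c * a) = const_mp c * var_component j e a"
  by (rule poly_mapping_eqI) (simp add: lookup_var_component lookup_const_mp_mult when_def)

lemma var_component_eq_0:
  "(\<And>m. m \<in> Poly_Mapping.keys a \<Longrightarrow> Poly_Mapping.lookup m j \<noteq> e) \<Longrightarrow> var_component j e a = 0"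
  by (rule poly_mapping_eqI) (auto simp: lookup_var_component in_keys_iff when_def)

lemma var_component_eq_self:
  "(\<And>m. m \<in> Poly_Mapping.keys a \<Longrightarrow> Poly_Mapping.lookup m j = e) \<Longrightarrow> var_component j e a = a"
  by (rule poly_mapping_eqI) (auto simp: lookup_var_component in_keys_iff when_def)

lemma var_component_above: "var_degree_le j d a \<Longrightarrow> d < e \<Longrightarrow> var_component j e a = 0"
  unfolding var_degree_le_def by (rule var_component_eq_0) auto

lemma var_component_degree_0: "var_degree_le j 0 a \<Longrightarrow> var_component j 0 a = a"
  unfolding var_degree_le_def by (rule var_component_eq_self) auto

lemma keys_mult_lookup:
  assumes "m \<in> Poly_Mapping.keys (a * b)"
  obtains m1 m2 where "m1 \<in> Poly_Mapping.keys a" "m2 \<in> Poly_Mapping.keys b"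
    "Poly_Mapping.lookup m j = Poly_Mapping.lookup m1 j + Poly_Mapping.lookup m2 j"
  using assms keys_mult[of a b] by (auto simp: lookup_add)

lemma var_degree_le_mult:
  "var_degree_le j d1 a \<Longrightarrow> var_degree_le j d2 b \<Longrightarrow> var_degree_le j (d1 + d2) (a * b)"
  unfolding var_degree_le_def by (metis add_mono keys_mult_lookup)

lemma var_component_mult:
  assumes a: "var_degree_le j d1 a" and b: "var_degree_le j d2 b"
  shows "var_component j (d1 + d2) (a * b) = var_component j d1 a * var_component j d2 b"
proof -
  define ca cb where "ca = var_component j d1 a" and "cb = var_component j d2 b"
  have ka: "Poly_Mapping.lookup m j = d1" if "m \<in> Poly_Mapping.keys ca" for m
    using that by (auto simp: ca_def in_keys_iff lookup_var_component)
  have kb: "Poly_Mapping.lookup m j = d2" if "m \<in> Poly_Mapping.keys cb" for m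
    using that by (auto simp: cb_def in_keys_iff lookup_var_component)
  have ka': "Poly_Mapping.lookup m j < d1" if "m \<in> Poly_Mapping.keys (a - ca)" for m
    using that a by (auto simp: ca_def var_degree_le_def in_keys_iff lookup_var_component lookup_minus
        when_def le_neq_implies_less split: if_splits)
  have kb': "Poly_Mapping.lookup m j < d2" if "m \<in> Poly_Mapping.keys (b - cb)" for m
    using that b by (auto simp: cb_def var_degree_le_def in_keys_iff lookup_var_component lookup_minus
        when_def le_neq_implies_less split: if_splits)
  have "a * b = ca * cb + ((a - ca) * b + ca * (b - cb))"
    by (simp add: algebra_simps)
  moreover have "var_component j (d1 + d2) (ca * cb) = ca * cb"
    by (rule var_component_eq_self) (metis keys_mult_lookup ka kb)
  moreover have "var_component j (d1 + d2) ((a - ca) * b) = 0"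
    using b by (intro var_component_eq_0)
      (metis keys_mult_lookup ka' var_degree_le_def add_less_le_mono less_irrefl)
  moreover have "var_component j (d1 + d2) (ca * (b - cb)) = 0"
    by (rule var_component_eq_0) (metis keys_mult_lookup ka kb' nat_add_left_cancel_less less_irrefl)
  ultimately show ?thesis
    by (simp add: var_component_add ca_def cb_def)
qed

lemma var_degree_le_1: "var_degree_le j 0 1"
  by (simp add: var_degree_le_def)

lemma var_component_power:
  assumes "var_degree_le j d a"
  shows "var_degree_le j (i * d) (a ^ i) \<and> var_component j (i * d) (a ^ i) = var_component j d a ^ i"
  using assms
  by (induction i) (simp_all add: var_degree_le_1 var_component_degree_0 var_degree_le_mult var_component_mult)

lemma var_component_prod_power:
  assumes "\<And>k. k \<in> K \<Longrightarrow> var_degree_le j (d k) (g k)"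
  shows "var_degree_le j (\<Sum>k\<in>K. e k * d k) (\<Prod>k\<in>K. g k ^ e k) \<and>
    var_component j (\<Sum>k\<in>K. e k * d k) (\<Prod>k\<in>K. g k ^ e k) = (\<Prod>k\<in>K. var_component j (d k) (g k) ^ e k)"
  using assms
proof (induction K rule: infinite_finite_induct)
  case (insert k K)
  then show ?case
    using var_component_power[of j "d k" "g k" "e k"] by (simp add: var_degree_le_mult var_component_mult)
qed (simp_all add: var_degree_le_1 var_component_degree_0)

lemma ex_var_degree_le_var_component_nonzero:
  assumes "a \<noteq> 0"
  obtains d where "var_degree_le j d a" "var_component j d a \<noteq> 0"
proof -
  let ?D = "(\<lambda>m. Poly_Mapping.lookup m j) ` Poly_Mapping.keys a"
  have "Max ?D \<in> ?D"
    using assms by (intro Max_in) auto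
  then obtain m where m: "m \<in> Poly_Mapping.keys a" "Poly_Mapping.lookup m j = Max ?D"
    by auto
  have "var_degree_le j (Max ?D) a"
    by (simp add: var_degree_le_def)
  moreover have "Poly_Mapping.lookup (var_component j (Max ?D) a) m \<noteq> 0"
    using m by (simp add: lookup_var_component in_keys_iff)
  then have "var_component j (Max ?D) a \<noteq> 0"
    by auto
  ultimately show ?thesis
    by (rule that)
qed

lemma var_degree_le_if_poly_in: "a \<in> poly_in n \<Longrightarrow> n \<le> j \<Longrightarrow> var_degree_le j 0 a"
  unfolding var_degree_le_def by (auto simp: in_keys_iff dest: poly_inD)

lemma poly_in_if_var_degree_le: "(\<And>j. n \<le> j \<Longrightarrow> var_degree_le j 0 a) \<Longrightarrow> a \<in> poly_in n"
  by (rule poly_inI) (metis in_keys_iff le_zero_eq var_degree_le_def not_le)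

lemma var_component_prod_power_top:
  fixes n :: nat
  assumes deg: "\<And>k. k < n \<Longrightarrow> var_degree_le j (d k) (g k)" and le: "\<And>k. k < n \<Longrightarrow> e k \<le> E k"
  shows "var_component j (\<Sum>k<n. E k * d k) (\<Prod>k<n. g k ^ e k) =
    (if \<forall>k<n. 0 < d k \<longrightarrow> e k = E k
     then (\<Prod>k<n. var_component j (d k) (g k) ^ (if 0 < d k then E k else 0)) *
       (\<Prod>k<n. g k ^ (if 0 < d k then 0 else e k))
     else 0)"
proof -
  have prod: "var_degree_le j (\<Sum>k<n. e k * d k) (\<Prod>k<n. g k ^ e k)"
    "var_component j (\<Sum>k<n. e k * d k) (\<Prod>k<n. g k ^ e k) = (\<Prod>k<n. var_component j (d k) (g k) ^ e k)"
    using var_component_prod_power[of "{..<n}" j d g e] deg by auto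
  show ?thesis
  proof (cases "\<forall>k<n. 0 < d k \<longrightarrow> e k = E k")
    case True
    have "(\<Sum>k<n. E k * d k) = (\<Sum>k<n. e k * d k)"
      using True by (intro sum.cong) auto
    moreover have "(\<Prod>k<n. var_component j (d k) (g k) ^ e k) =
        (\<Prod>k<n. var_component j (d k) (g k) ^ (if 0 < d k then E k else 0)) *
        (\<Prod>k<n. g k ^ (if 0 < d k then 0 else e k))"
      unfolding prod.distrib[symmetric]
    proof (rule prod.cong)
      fix k
      assume "k \<in> {..<n}"
      with deg[of k] True show "var_component j (d k) (g k) ^ e k =
          var_component j (d k) (g k) ^ (if 0 < d k then E k else 0) * g k ^ (if 0 < d k then 0 else e k)"
        by (auto simp: var_component_degree_0)
    qed simp
    ultimately show ?thesis
      unfolding if_P[OF True] using prod(2) by (simp only:)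
  next
    case False
    then obtain k where "k < n" "0 < d k" "e k \<noteq> E k"
      by blast
    have "(\<Sum>k<n. e k * d k) < (\<Sum>k<n. E k * d k)"
    proof (rule sum_strict_mono_ex1)
      show "\<forall>k\<in>{..<n}. e k * d k \<le> E k * d k"
        using le by simp
      show "\<exists>k\<in>{..<n}. e k * d k < E k * d k"
        using le[of k] \<open>k < n\<close> \<open>0 < d k\<close> \<open>e k \<noteq> E k\<close> by auto
    qed simp
    then have "var_component j (\<Sum>k<n. E k * d k) (\<Prod>k<n. g k ^ e k) = 0"
      by (rule var_component_above[OF prod(1)])
    then show ?thesis
      by (simp only: if_not_P[OF False])
  qed
qed

section \<open>The images of the variables\<close>

text \<open>For \<open>p\<close> in \<open>C[x_1..x_n]\<close>: the coefficient of \<open>\<Prod>k\<in>S. x_k ^ M_k\<close> when \<open>p\<close> is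
  regarded as a polynomial in the variables of \<open>S\<close> with coefficients in the other variables.\<close>
definition coeff_in_vars :: "nat \<Rightarrow> (nat \<Rightarrow> bool) \<Rightarrow> (nat \<Rightarrow>\<^sub>0 nat) \<Rightarrow> mpoly \<Rightarrow> mpoly" where
  "coeff_in_vars n S M p =
    (\<Sum>m\<in>{m \<in> Poly_Mapping.keys p. \<forall>k<n. S k \<longrightarrow> Poly_Mapping.lookup m k = Poly_Mapping.lookup M k}.
       const_mp (Poly_Mapping.lookup p m) * (\<Prod>k<n. Var k ^ (if S k then 0 else Poly_Mapping.lookup m k)))"

lemma poly_in_coeff_in_vars: "coeff_in_vars n S M p \<in> poly_in n"
  unfolding coeff_in_vars_def
  by (intro poly_in_sum poly_in_mult poly_in_const_mp poly_in_prod poly_in_power poly_in_Var) simp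

lemma coeff_in_vars_nonzero:
  assumes p: "p \<in> poly_in n" and M: "Poly_Mapping.lookup p M \<noteq> 0"
  shows "coeff_in_vars n S M p \<noteq> 0"
proof
  assume zero: "coeff_in_vars n S M p = 0"
  define K where "K = {m \<in> Poly_Mapping.keys p. \<forall>k<n. S k \<longrightarrow> Poly_Mapping.lookup m k = Poly_Mapping.lookup M k}"
  have "coeff_in_vars n S M p * (\<Prod>k<n. Var k ^ (if S k then Poly_Mapping.lookup M k else 0)) =
      (\<Sum>m\<in>K. Poly_Mapping.single m (Poly_Mapping.lookup p m))"
    unfolding coeff_in_vars_def K_def[symmetric] sum_distrib_right
  proof (rule sum.cong)
    fix m
    assume "m \<in> K"
    then have keys: "Poly_Mapping.keys m \<subseteq> {..<n}"
      and agree: "\<And>k. k < n \<Longrightarrow> S k \<Longrightarrow> Poly_Mapping.lookup m k = Poly_Mapping.lookup M k"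
      using p by (auto simp: K_def poly_in_iff_keys)
    have "(\<Prod>k<n. Var k ^ (if S k then 0 else Poly_Mapping.lookup m k)) *
        (\<Prod>k<n. Var k ^ (if S k then Poly_Mapping.lookup M k else 0)) = (\<Prod>k<n. Var k ^ Poly_Mapping.lookup m k)"
      unfolding prod.distrib[symmetric] power_add[symmetric] using agree by (intro prod.cong) auto
    then show "const_mp (Poly_Mapping.lookup p m) * (\<Prod>k<n. Var k ^ (if S k then 0 else Poly_Mapping.lookup m k)) *
        (\<Prod>k<n. Var k ^ (if S k then Poly_Mapping.lookup M k else 0)) =
        Poly_Mapping.single m (Poly_Mapping.lookup p m)"
      by (simp add: mult.assoc flip: monomial_eq_prod_Var_power[OF keys] single_eq_const_mp_mult)
  qed simp
  moreover have "M \<in> K"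
    using M by (simp add: K_def in_keys_iff)
  then have "Poly_Mapping.lookup (\<Sum>m\<in>K. Poly_Mapping.single m (Poly_Mapping.lookup p m)) M = Poly_Mapping.lookup p M"
    by (simp add: lookup_sum lookup_single when_def K_def)
  ultimately show False
    using zero M by simp
qed

context alg_hom_on
begin

lemma var_component_image:
  assumes "n \<le> N" and p: "p \<in> poly_in n"
    and bounded: "\<forall>m\<in>Poly_Mapping.keys p. \<forall>k. Poly_Mapping.lookup m k \<le> Poly_Mapping.lookup M k"
    and deg: "\<And>k. k < n \<Longrightarrow> var_degree_le j (d k) (f (Var k))"
  shows "var_component j (\<Sum>k<n. Poly_Mapping.lookup M k * d k) (f p) =
    (\<Prod>k<n. var_component j (d k) (f (Var k)) ^ (if 0 < d k then Poly_Mapping.lookup M k else 0)) *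
    f (coeff_in_vars n (\<lambda>k. 0 < d k) M p)"
proof -
  let ?D = "\<Sum>k<n. Poly_Mapping.lookup M k * d k"
  let ?X = "\<Prod>k<n. var_component j (d k) (f (Var k)) ^ (if 0 < d k then Poly_Mapping.lookup M k else 0)"
  let ?rest = "\<lambda>m. \<Prod>k<n. f (Var k) ^ (if 0 < d k then 0 else Poly_Mapping.lookup m k)"
  let ?agree = "\<lambda>m. \<forall>k<n. 0 < d k \<longrightarrow> Poly_Mapping.lookup m k = Poly_Mapping.lookup M k"
  have top_term: "var_component j ?D (\<Prod>k<n. f (Var k) ^ Poly_Mapping.lookup m k) =
      (if ?agree m then ?X * ?rest m else 0)" if "m \<in> Poly_Mapping.keys p" for m
    by (rule var_component_prod_power_top[OF deg]) (use that bounded in auto)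
  have "var_component j ?D (f p) = var_component j ?D (\<Sum>m\<in>Poly_Mapping.keys p.
      const_mp (Poly_Mapping.lookup p m) * (\<Prod>k<n. f (Var k) ^ Poly_Mapping.lookup m k))"
    by (subst mpoly_eq_sum_monomials[OF p]) (simp add: hom_sum_prod_Var_power[OF \<open>n \<le> N\<close>])
  also have "\<dots> = (\<Sum>m\<in>Poly_Mapping.keys p. const_mp (Poly_Mapping.lookup p m) * (if ?agree m then ?X * ?rest m else 0))"
    by (simp add: var_component_sum var_component_const_mp_mult top_term cong: sum.cong)
  also have "\<dots> = (\<Sum>m\<in>{m \<in> Poly_Mapping.keys p. ?agree m}. const_mp (Poly_Mapping.lookup p m) * (?X * ?rest m))"
    by (rule sum.mono_neutral_cong_right) auto
  also have "\<dots> = ?X * f (coeff_in_vars n (\<lambda>k. 0 < d k) M p)"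
    by (simp add: coeff_in_vars_def hom_sum_prod_Var_power[OF \<open>n \<le> N\<close>] sum_distrib_left mult.left_commute
        if_distrib[of "\<lambda>e. f (Var _) ^ e"])
  finally show ?thesis .
qed

lemma Var_image_in_poly_in:
  assumes inj: "inj_on f (poly_in N)" and "n \<le> N" and p: "p \<in> poly_in n"
    and M_pos: "\<forall>k<n. 0 < Poly_Mapping.lookup M k" and M: "Poly_Mapping.lookup p M \<noteq> 0"
    and bounded: "\<forall>m\<in>Poly_Mapping.keys p. \<forall>k. Poly_Mapping.lookup m k \<le> Poly_Mapping.lookup M k"
    and image: "f p \<in> poly_in n" and "i < n"
  shows "f (Var i) \<in> poly_in n"
proof (rule poly_in_if_var_degree_le)
  fix j
  assume "n \<le> j"
  have nonzero: "f a \<noteq> 0" if "a \<in> poly_in N" "a \<noteq> 0" for a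
    using that inj hom_zero by (metis inj_on_contraD poly_in_0)
  have "\<forall>k. \<exists>d. k < n \<longrightarrow> var_degree_le j d (f (Var k)) \<and> var_component j d (f (Var k)) \<noteq> 0"
    using ex_var_degree_le_var_component_nonzero nonzero poly_in_Var \<open>n \<le> N\<close> Var_nonzero
    by (metis order_less_le_trans)
  then obtain d where deg: "\<And>k. k < n \<Longrightarrow> var_degree_le j (d k) (f (Var k))"
    and top: "\<And>k. k < n \<Longrightarrow> var_component j (d k) (f (Var k)) \<noteq> 0"
    by metis
  show "var_degree_le j 0 (f (Var i))"
  proof (rule ccontr)
    assume "\<not> var_degree_le j 0 (f (Var i))"
    with deg[OF \<open>i < n\<close>] have "0 < d i"
      by (metis gr0I)
    let ?D = "\<Sum>k<n. Poly_Mapping.lookup M k * d k"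
    have "Poly_Mapping.lookup M i * d i \<le> ?D"
      using \<open>i < n\<close> by (intro member_le_sum) auto
    with M_pos \<open>i < n\<close> \<open>0 < d i\<close> have "0 < ?D"
      by (metis nat_0_less_mult_iff order_less_le_trans)
    with var_degree_le_if_poly_in[OF image \<open>n \<le> j\<close>] have "var_component j ?D (f p) = 0"
      by (rule var_component_above)
    moreover have "f (coeff_in_vars n (\<lambda>k. 0 < d k) M p) \<noteq> 0"
      using nonzero coeff_in_vars_nonzero[OF p M] poly_in_coeff_in_vars poly_in_mono[OF \<open>n \<le> N\<close>]
      by blast
    ultimately show False
      using var_component_image[OF \<open>n \<le> N\<close> p bounded deg] top by simp
  qed
qed

end

section \<open>Surjectivity through the Jacobian matrix\<close>

lemma mult_mat_vec_eq_0_if_right_inverse: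
  fixes A B :: "'a::idom mat"
  assumes A: "A \<in> carrier_mat n n" and B: "B \<in> carrier_mat n n" and AB: "A * B = 1\<^sub>m n"
    and v: "v \<in> carrier_vec n" and Av: "A *\<^sub>v v = 0\<^sub>v n"
  shows "v = 0\<^sub>v n"
proof -
  have "det A * det B = 1"
    using det_mult[OF A B] AB by simp
  then have "det A \<noteq> 0"
    by auto
  with det_0_iff_vec_prod_zero[OF A] v Av show ?thesis
    by blast
qed

lemma inv_into_Var_in_poly_in:
  assumes aut: "is_alg_aut N \<phi>" and "n \<le> N" and Var_image: "\<And>k. k < n \<Longrightarrow> \<phi> (Var k) \<in> poly_in n"
    and "i < n"
  shows "inv_into (poly_in N) \<phi> (Var i) \<in> poly_in n"
proof -
  define \<psi> where "\<psi> = inv_into (poly_in N) \<phi>"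
  interpret \<psi>: alg_hom_on N \<psi>
    unfolding \<psi>_def using is_alg_aut_inv_into[OF aut] by (rule alg_hom_on_if_is_alg_aut)
  have \<psi>_\<phi>: "\<psi> (\<phi> a) = a" if "a \<in> poly_in N" for a
    using that aut by (simp add: \<psi>_def is_alg_aut_def bij_betw_def)
  have Var_N: "Var k \<in> poly_in N" if "k < n" for k
    using that \<open>n \<le> N\<close> by (simp add: poly_in_Var)
  have chain: "(\<Sum>i<n. \<psi> (partial_deriv i (\<phi> (Var k))) * partial_deriv l (\<psi> (Var i))) = partial_deriv l (Var k)"
    if "k < n" for k l
  proof -
    have "(\<Sum>i<n. \<psi> (partial_deriv i (\<phi> (Var k))) * partial_deriv l (\<psi> (Var i))) =
        (\<Sum>i<N. \<psi> (partial_deriv i (\<phi> (Var k))) * partial_deriv l (\<psi> (Var i)))"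
      using \<open>n \<le> N\<close> partial_deriv_eq_0_if_poly_in[OF Var_image[OF that]]
      by (intro sum.mono_neutral_left) (auto simp: \<psi>.hom_zero)
    also have "\<dots> = partial_deriv l (\<psi> (\<phi> (Var k)))"
      using poly_in_mono[OF \<open>n \<le> N\<close> Var_image[OF that]] by (rule \<psi>.chain_rule[symmetric])
    finally show ?thesis
      using that by (simp add: \<psi>_\<phi> Var_N)
  qed
  \<comment> \<open>\<open>A * B\<close> is the Jacobian matrix of \<open>\<psi> \<circ> \<phi> = id\<close> in the first \<open>n\<close> variables.\<close>
  define A where "A = mat n n (\<lambda>(k, i). \<psi> (partial_deriv i (\<phi> (Var k))))"
  define B where "B = mat n n (\<lambda>(i, l). partial_deriv l (\<psi> (Var i)))"
  have AB: "A * B = 1\<^sub>m n"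
    by (rule eq_matI)
      (auto simp: A_def B_def scalar_prod_def atLeast0LessThan chain partial_deriv_Var)
  have "partial_deriv l (\<psi> (Var i)) = 0" if "n \<le> l" for l
  proof -
    define v where "v = vec n (\<lambda>i. partial_deriv l (\<psi> (Var i)))"
    have Av: "A *\<^sub>v v = 0\<^sub>v n"
      using that by (intro eq_vecI) (auto simp: A_def v_def scalar_prod_def atLeast0LessThan chain partial_deriv_Var)
    have "v = 0\<^sub>v n"
      by (rule mult_mat_vec_eq_0_if_right_inverse[OF _ _ AB _ Av]) (simp_all add: A_def B_def v_def)
    with \<open>i < n\<close> show ?thesis
      by (metis index_vec index_zero_vec(1) v_def)
  qed
  moreover have "\<psi> (Var i) \<in> poly_in N"
    using aut \<open>i < n\<close> Var_N
    by (auto simp: \<psi>_def is_alg_aut_def bij_betw_def intro: inv_into_into)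
  ultimately have "\<psi> (Var i) \<in> poly_in n"
    using poly_in_if_partial_deriv_eq_0 by blast
  then show ?thesis
    by (simp add: \<psi>_def)
qed

lemma is_alg_aut_restrict:
  assumes aut: "is_alg_aut N \<phi>" and "n \<le> N"
    and \<phi>_Var: "\<And>k. k < n \<Longrightarrow> \<phi> (Var k) \<in> poly_in n"
    and \<psi>_Var: "\<And>k. k < n \<Longrightarrow> inv_into (poly_in N) \<phi> (Var k) \<in> poly_in n"
  shows "is_alg_aut n \<phi>"
proof -
  let ?\<psi> = "inv_into (poly_in N) \<phi>"
  interpret alg_hom_on N \<phi>
    using aut by (rule alg_hom_on_if_is_alg_aut)
  interpret \<psi>: alg_hom_on N ?\<psi>
    using is_alg_aut_inv_into[OF aut] by (rule alg_hom_on_if_is_alg_aut)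
  have sub: "poly_in n \<subseteq> poly_in N"
    using poly_in_mono[OF \<open>n \<le> N\<close>] by blast
  have bij: "bij_betw \<phi> (poly_in N) (poly_in N)"
    using aut by (simp add: is_alg_aut_def)
  have "bij_betw \<phi> (poly_in n) (poly_in n)"
  proof (rule bij_betw_byWitness[where f' = ?\<psi>])
    show "\<forall>a\<in>poly_in n. ?\<psi> (\<phi> a) = a" "\<forall>a\<in>poly_in n. \<phi> (?\<psi> a) = a"
      using bij sub by (auto simp: bij_betw_def f_inv_into_f)
    show "\<phi> ` poly_in n \<subseteq> poly_in n" "?\<psi> ` poly_in n \<subseteq> poly_in n"
      using hom_maps_poly_in[OF \<open>n \<le> N\<close> \<phi>_Var] \<psi>.hom_maps_poly_in[OF \<open>n \<le> N\<close> \<psi>_Var] by auto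
  qed
  moreover have in_N: "a \<in> poly_in N" if "a \<in> poly_in n" for a
    using that sub by blast
  moreover have "\<forall>a\<in>poly_in n. \<forall>b\<in>poly_in n. \<phi> (a + b) = \<phi> a + \<phi> b"
    using in_N hom_add by metis
  moreover have "\<forall>a\<in>poly_in n. \<forall>b\<in>poly_in n. \<phi> (a * b) = \<phi> a * \<phi> b"
    using in_N hom_mult by metis
  moreover have "\<forall>c. \<forall>a\<in>poly_in n. \<phi> (const_mp c * a) = const_mp c * \<phi> a"
    using in_N hom_smult by metis
  ultimately show ?thesis
    unfolding is_alg_aut_def using hom_one by blast
qed

theorem proposition1p4:
  fixes n N :: nat and p q :: mpoly and M :: "nat \<Rightarrow>\<^sub>0 nat" and \<phi> :: "mpoly \<Rightarrow> mpoly"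
  assumes "p \<in> poly_in n"
    and "\<forall>k<n. Poly_Mapping.lookup M k > 0"
    and "\<forall>k\<ge>n. Poly_Mapping.lookup M k = 0"
    and "Poly_Mapping.lookup p M = 1"
    and "\<forall>m \<in> Poly_Mapping.keys p. \<forall>k. Poly_Mapping.lookup m k \<le> Poly_Mapping.lookup M k"
    and "q \<in> poly_in n"
    and "N \<ge> n"
    and "is_alg_aut N \<phi>"
    and "\<phi> p = q"
  shows "\<exists>\<alpha>. is_alg_aut n \<alpha> \<and> \<alpha> p = q"
proof -
  \<comment> \<open>The support condition on \<open>M\<close> follows from \<open>M\<close> being a monomial of \<open>p\<close>.\<close>
  interpret alg_hom_on N \<phi>
    using \<open>is_alg_aut N \<phi>\<close> by (rule alg_hom_on_if_is_alg_aut)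
  have inj: "inj_on \<phi> (poly_in N)"
    using \<open>is_alg_aut N \<phi>\<close> by (simp add: is_alg_aut_def bij_betw_def)
  have \<phi>_Var: "\<phi> (Var k) \<in> poly_in n" if "k < n" for k
    using Var_image_in_poly_in[OF inj \<open>N \<ge> n\<close> \<open>p \<in> poly_in n\<close>] that assms(2,4,5,6,9) by simp
  have "inv_into (poly_in N) \<phi> (Var k) \<in> poly_in n" if "k < n" for k
    using inv_into_Var_in_poly_in[OF \<open>is_alg_aut N \<phi>\<close> \<open>N \<ge> n\<close> \<phi>_Var that] .
  with \<phi>_Var have "is_alg_aut n \<phi>"
    using is_alg_aut_restrict[OF \<open>is_alg_aut N \<phi>\<close> \<open>N \<ge> n\<close>] by blast
  with \<open>\<phi> p = q\<close> show ?thesis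
    by blast
qed

end
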